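(* Let $X,Y$ be $\mathfrak{Q}$-preordered $\mathfrak{Q}$-subsets and $f\colon\mathsf{P}X\to\mathsf{P}Y$ a $\mathfrak{Q}$-order-preserving map. The following are equivalent: (i) $f$ is a left adjoint in $\mathfrak{Q}\text{-}\mathbf{FOrd}$, i.e. there is a $\mathfrak{Q}$-order-preserving $g\colon\mathsf{P}Y\to\mathsf{P}X$ with $f\dashv g$ (a $\mathfrak{Q}$-axiality from $X$ to $Y$); (ii) $f$ is a left adjoint between the underlying preordered sets of $\mathsf{P}X$ and $\mathsf{P}Y$, and $f(u\circ\mu)=u\circ f\mu$ for all $\mu\in\mathsf{P}X$, $q\in\mathfrak{Q}$ and $u\in\mathcal{D}\mathfrak{Q}(|\mu|,q)$; (iii) $f$ is a left adjoint between the underlying preordered sets of $\mathsf{P}X$ and $\mathsf{P}Y$, and $f(u\circ\mathsf{y}_X x)=u\circ f\mathsf{y}_X x$ for all $x\in X$, $q\in\mathfrak{Q}$ and $u\in\mathcal{D}\mathfrak{Q}(|x|,q)$.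
   Context: $(\mathfrak{Q},\&,e)$ is a non-trivial unital quantale (complete lattice with associative multiplication with unit $e$ preserving joins in each variable, $\bot<e$), implications $p\& q\le r\iff p\le r/ q\iff q\le p\backslash r$, and $\mathcal{D}\mathfrak{Q}(p,q)=\{u\mid (u/ p)\& p=u=q\&(q\backslash u)\}$. A $\mathfrak{Q}$-subset is a set $X$ with $|\cdot|\colon X\to\mathfrak{Q}$; $\mathbf{1}_q$ is the singleton $\{*\}$ with $|*|=q$, and $u\in\mathcal{D}\mathfrak{Q}(p,q)$ is identified with the $\mathfrak{Q}$-relation from $\mathbf{1}_p$ to $\mathbf{1}_q$ with value $u$. A $\mathfrak{Q}$-relation from $X$ to $Y$ is a map $\phi\colon X\times Y\to\mathfrak{Q}$ with $\phi(x,y)\in\mathcal{D}\mathfrak{Q}(|x|,|y|)$, ordered pointwise; composition $(\psi\circ\phi)(x,z)=\bigvee_y(\psi(y,z)/|y|)\&\phi(x,y)$; $\xi\swarrow\phi$ is the largest $\psi'$ with $\psi'\circ\phi\le\xi$, and $\psi\searrow\xi$ the largest $\phi'$ with $\psi\circ\phi'\le\xi$. $\mathrm{id}_X(x,x)=|x|$, $\bot$ elsewhere. A $\mathfrak{Q}$-preordered $\mathfrak{Q}$-subset is a $\mathfrak{Q}$-subset $X$ with a $\mathfrak{Q}$-relation $1_X^{\natural}$ from $X$ to $X$ satisfying $\mathrm{id}_X\le 1_X^{\natural}$ and $1_X^{\natural}\circ 1_X^{\natural}\le 1_X^{\natural}$; its underlying preorder is $x\le y\iff |x|=|y|$ and $|x|\le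 1_X^{\natural}(x,y)$. A $\mathfrak{Q}$-order-preserving map $f\colon X\to Y$ satisfies $|fx|=|x|$ and $1_X^{\natural}(x,x')\le 1_Y^{\natural}(fx,fx')$; for such $f,g\colon X\to Y$, $f\le g$ means $|x|\le 1_Y^{\natural}(fx,gx)$ for all $x$. A $\mathfrak{Q}$-Galois connection $f\dashv g$ ($f\colon X\to Y$, $g\colon Y\to X$ $\mathfrak{Q}$-order-preserving) means $1_X\le gf$ and $fg\le 1_Y$; $\mathfrak{Q}\text{-}\mathbf{FOrd}$ is the category of $\mathfrak{Q}$-preordered $\mathfrak{Q}$-subsets and $\mathfrak{Q}$-order-preserving maps. The $\mathfrak{Q}$-powerset $\mathsf{P}X$ is the $\mathfrak{Q}$-subset of all potential lower $\mathfrak{Q}$-subsets, i.e. $\mathfrak{Q}$-relations $\mu$ from $X$ to some $\mathbf{1}_q$ with $\mu\circ 1_X^{\natural}\le\mu$, with $|\mu|=q$ and $\mathfrak{Q}$-preorder $1_{\mathsf{P}X}^{\natural}(\mu,\mu')=\mu'\swarrow\mu$. The Yoneda embedding $\mathsf{y}_X\colon X\to\mathsf{P}X$ sends $x$ to $1_X^{\natural}(-,x)$, a $\mathfrak{Q}$-relation from $X$ to $\mathbf{1}_{|x|}$. *)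

theory Defs
  imports Main
begin

definition quantale :: "('q::complete_lattice \<Rightarrow> 'q \<Rightarrow> 'q) \<Rightarrow> 'q \<Rightarrow> bool" where
  "quantale mult e \<longleftrightarrow>
     (\<forall>a b c. mult (mult a b) c = mult a (mult b c)) \<and>
     (\<forall>a. mult e a = a \<and> mult a e = a) \<and>
     (\<forall>a S. mult a (Sup S) = Sup (mult a ` S)) \<and>
     (\<forall>b S. mult (Sup S) b = Sup ((\<lambda>a. mult a b) ` S)) \<and>
     bot < e"

definition rimp :: "('q::complete_lattice \<Rightarrow> 'q \<Rightarrow> 'q) \<Rightarrow> 'q \<Rightarrow> 'q \<Rightarrow> 'q" where
  "rimp mult r q = Sup {p. mult p q \<le> r}"

definition limp :: "('q::complete_lattice \<Rightarrow> 'q \<Rightarrow> 'q) \<Rightarrow> 'q \<Rightarrow> 'q \<Rightarrow> 'q" where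
  "limp mult p r = Sup {q. mult p q \<le> r}"

definition DQ :: "('q::complete_lattice \<Rightarrow> 'q \<Rightarrow> 'q) \<Rightarrow> 'q \<Rightarrow> 'q \<Rightarrow> 'q set" where
  "DQ mult p q = {u. mult (rimp mult u p) p = u \<and> u = mult q (limp mult q u)}"

definition qrel :: "('q::complete_lattice \<Rightarrow> 'q \<Rightarrow> 'q) \<Rightarrow> 'x set \<Rightarrow> ('x \<Rightarrow> 'q)
     \<Rightarrow> 'y set \<Rightarrow> ('y \<Rightarrow> 'q) \<Rightarrow> ('x \<Rightarrow> 'y \<Rightarrow> 'q) \<Rightarrow> bool" where
  "qrel mult X nX Y nY \<phi> \<longleftrightarrow> (\<forall>x\<in>X. \<forall>y\<in>Y. \<phi> x y \<in> DQ mult (nX x) (nY y))"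

definition rel_le :: "'x set \<Rightarrow> 'y set \<Rightarrow> ('x \<Rightarrow> 'y \<Rightarrow> 'q::complete_lattice)
     \<Rightarrow> ('x \<Rightarrow> 'y \<Rightarrow> 'q) \<Rightarrow> bool" where
  "rel_le X Y \<phi> \<psi> \<longleftrightarrow> (\<forall>x\<in>X. \<forall>y\<in>Y. \<phi> x y \<le> \<psi> x y)"

definition qcomp :: "('q::complete_lattice \<Rightarrow> 'q \<Rightarrow> 'q) \<Rightarrow> 'y set \<Rightarrow> ('y \<Rightarrow> 'q)
     \<Rightarrow> ('x \<Rightarrow> 'y \<Rightarrow> 'q) \<Rightarrow> ('y \<Rightarrow> 'z \<Rightarrow> 'q) \<Rightarrow> ('x \<Rightarrow> 'z \<Rightarrow> 'q)" where
  "qcomp mult Y nY \<phi> \<psi> = (\<lambda>x z. Sup {mult (rimp mult (\<psi> y z) (nY y)) (\<phi> x y) | y. y \<in> Y})"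

definition qlift :: "('q::complete_lattice \<Rightarrow> 'q \<Rightarrow> 'q) \<Rightarrow> 'x set \<Rightarrow> 'y set \<Rightarrow> ('y \<Rightarrow> 'q)
     \<Rightarrow> 'z set \<Rightarrow> ('z \<Rightarrow> 'q) \<Rightarrow> ('x \<Rightarrow> 'z \<Rightarrow> 'q) \<Rightarrow> ('x \<Rightarrow> 'y \<Rightarrow> 'q) \<Rightarrow> ('y \<Rightarrow> 'z \<Rightarrow> 'q)" where
  "qlift mult X Y nY Z nZ \<xi> \<phi> =
     (\<lambda>y z. Sup {\<psi> y z | \<psi>. qrel mult Y nY Z nZ \<psi> \<and> rel_le X Z (qcomp mult Y nY \<phi> \<psi>) \<xi>})"

definition qid :: "('x \<Rightarrow> 'q::complete_lattice) \<Rightarrow> 'x \<Rightarrow> 'x \<Rightarrow> 'q" where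
  "qid nX = (\<lambda>x y. if x = y then nX x else bot)"

definition qpreorder :: "('q::complete_lattice \<Rightarrow> 'q \<Rightarrow> 'q) \<Rightarrow> 'x set \<Rightarrow> ('x \<Rightarrow> 'q)
     \<Rightarrow> ('x \<Rightarrow> 'x \<Rightarrow> 'q) \<Rightarrow> bool" where
  "qpreorder mult X nX R \<longleftrightarrow> qrel mult X nX X nX R \<and> rel_le X X (qid nX) R
      \<and> rel_le X X (qcomp mult X nX R R) R"

definition uleq :: "('x \<Rightarrow> 'q::complete_lattice) \<Rightarrow> ('x \<Rightarrow> 'x \<Rightarrow> 'q) \<Rightarrow> 'x \<Rightarrow> 'x \<Rightarrow> bool" where
  "uleq nX R x y \<longleftrightarrow> nX x = nX y \<and> nX x \<le> R x y"

definition qord_map :: "'x set \<Rightarrow> ('x \<Rightarrow> 'q::complete_lattice) \<Rightarrow> ('x \<Rightarrow> 'x \<Rightarrow> 'q)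
     \<Rightarrow> 'y set \<Rightarrow> ('y \<Rightarrow> 'q) \<Rightarrow> ('y \<Rightarrow> 'y \<Rightarrow> 'q) \<Rightarrow> ('x \<Rightarrow> 'y) \<Rightarrow> bool" where
  "qord_map X nX RX Y nY RY f \<longleftrightarrow>
     (\<forall>x\<in>X. f x \<in> Y \<and> nY (f x) = nX x) \<and> (\<forall>x\<in>X. \<forall>x'\<in>X. RX x x' \<le> RY (f x) (f x'))"

definition map_le :: "'x set \<Rightarrow> ('x \<Rightarrow> 'q::complete_lattice) \<Rightarrow> ('y \<Rightarrow> 'y \<Rightarrow> 'q)
     \<Rightarrow> ('x \<Rightarrow> 'y) \<Rightarrow> ('x \<Rightarrow> 'y) \<Rightarrow> bool" where
  "map_le X nX RY f g \<longleftrightarrow> (\<forall>x\<in>X. nX x \<le> RY (f x) (g x))"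

definition qgalois :: "'x set \<Rightarrow> ('x \<Rightarrow> 'q::complete_lattice) \<Rightarrow> ('x \<Rightarrow> 'x \<Rightarrow> 'q)
     \<Rightarrow> 'y set \<Rightarrow> ('y \<Rightarrow> 'q) \<Rightarrow> ('y \<Rightarrow> 'y \<Rightarrow> 'q) \<Rightarrow> ('x \<Rightarrow> 'y) \<Rightarrow> ('y \<Rightarrow> 'x) \<Rightarrow> bool" where
  "qgalois X nX RX Y nY RY f g \<longleftrightarrow>
     map_le X nX RX id (g \<circ> f) \<and> map_le Y nY RY (f \<circ> g) id"

definition ul_left_adjoint :: "'x set \<Rightarrow> ('x \<Rightarrow> 'q::complete_lattice) \<Rightarrow> ('x \<Rightarrow> 'x \<Rightarrow> 'q)
     \<Rightarrow> 'y set \<Rightarrow> ('y \<Rightarrow> 'q) \<Rightarrow> ('y \<Rightarrow> 'y \<Rightarrow> 'q) \<Rightarrow> ('x \<Rightarrow> 'y) \<Rightarrow> bool" where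
  "ul_left_adjoint X nX RX Y nY RY f \<longleftrightarrow>
     (\<exists>g. (\<forall>y\<in>Y. g y \<in> X) \<and>
          (\<forall>x\<in>X. \<forall>y\<in>Y. uleq nY RY (f x) y \<longleftrightarrow> uleq nX RX x (g y)))"

text \<open>An element mu of P X with |mu| = q is represented as the pair (q, m), where
  m x is the value mu(x, *) of the Q-relation from X to 1_q (m is bot outside X,
  to have a canonical representative).\<close>

definition pset :: "('q::complete_lattice \<Rightarrow> 'q \<Rightarrow> 'q) \<Rightarrow> 'x set \<Rightarrow> ('x \<Rightarrow> 'q)
     \<Rightarrow> ('x \<Rightarrow> 'x \<Rightarrow> 'q) \<Rightarrow> ('q \<times> ('x \<Rightarrow> 'q)) set" where
  "pset mult X nX R = {(q, m). (\<forall>x. x \<notin> X \<longrightarrow> m x = bot) \<and>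
      qrel mult X nX {()} (\<lambda>_. q) (\<lambda>x _. m x) \<and>
      rel_le X {()} (qcomp mult X nX R (\<lambda>x _. m x)) (\<lambda>x _. m x)}"

definition pnorm :: "'q \<times> ('x \<Rightarrow> 'q) \<Rightarrow> 'q" where
  "pnorm \<mu> = fst \<mu>"

text \<open>1_{PX}(mu, mu') = mu' swarrow mu.\<close>

definition prel :: "('q::complete_lattice \<Rightarrow> 'q \<Rightarrow> 'q) \<Rightarrow> 'x set
     \<Rightarrow> 'q \<times> ('x \<Rightarrow> 'q) \<Rightarrow> 'q \<times> ('x \<Rightarrow> 'q) \<Rightarrow> 'q" where
  "prel mult X \<mu> \<mu>' =
     qlift mult X {()} (\<lambda>_. fst \<mu>) {()} (\<lambda>_. fst \<mu>')
        (\<lambda>x _. snd \<mu>' x) (\<lambda>x _. snd \<mu> x) () ()"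

text \<open>u o mu for mu in P X with |mu| = p and u in DQ(p, q) (u viewed as a
  Q-relation from 1_p to 1_q): (u o mu)(x) = (u / p) & mu(x), with |u o mu| = q.\<close>

definition pcomp :: "('q::complete_lattice \<Rightarrow> 'q \<Rightarrow> 'q) \<Rightarrow> 'q \<Rightarrow> 'q
     \<Rightarrow> 'q \<times> ('x \<Rightarrow> 'q) \<Rightarrow> 'q \<times> ('x \<Rightarrow> 'q)" where
  "pcomp mult u q \<mu> = (q, \<lambda>x. mult (rimp mult u (fst \<mu>)) (snd \<mu> x))"

definition yon :: "'x set \<Rightarrow> ('x \<Rightarrow> 'q::complete_lattice) \<Rightarrow> ('x \<Rightarrow> 'x \<Rightarrow> 'q)
     \<Rightarrow> 'x \<Rightarrow> 'q \<times> ('x \<Rightarrow> 'q)" where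
  "yon X nX R x = (nX x, \<lambda>z. if z \<in> X then R z x else bot)"

end

theory Submission
  imports Defs
begin

text \<open>In (ii) and (iii) the left adjoint \<open>g\<close> of \<open>f\<close> between the underlying orders automatically
  preserves norms, so \<open>f \<mu> \<le> \<nu> \<longleftrightarrow> \<mu> \<le> g \<nu>\<close> for the pointwise orders of \<open>PX\<close> and \<open>PY\<close>.
  A \<open>\<Q>\<close>-order-preserving map is lax for the action of \<open>DQ\<close> on powersets, \<open>u \<circ> f \<mu> \<le> f (u \<circ> \<mu>)\<close>,
  so commutation with \<open>u\<close> is the converse inequality, equivalently \<open>u \<circ> \<mu> \<le> g (u \<circ> f \<mu>)\<close>.
  If \<open>g\<close> is \<open>\<Q>\<close>-order-preserving, this follows from the unit \<open>\<mu> \<le> g (f \<mu>)\<close> and laxity of \<open>g\<close>.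
  Conversely, since \<open>1\<^sub>P\<^sub>Y(\<nu>, \<nu>')\<close> is the largest \<open>v\<close> with \<open>v \<circ> \<nu> \<le> \<nu>'\<close>, commutation of \<open>f\<close> gives
  \<open>f (v \<circ> g \<nu>) = v \<circ> f (g \<nu>) \<le> v \<circ> \<nu> \<le> \<nu>'\<close>, hence \<open>v \<circ> g \<nu> \<le> g \<nu>'\<close>: \<open>g\<close> is \<open>\<Q>\<close>-order-preserving.
  Finally every \<open>\<mu>\<close> is the join of the \<open>\<mu>(x) \<circ> y\<^sub>X x\<close>, so commutation on representables suffices.\<close>

definition pset_le :: "'x set \<Rightarrow> 'q::order \<times> ('x \<Rightarrow> 'q) \<Rightarrow> 'q \<times> ('x \<Rightarrow> 'q) \<Rightarrow> bool" where
  "pset_le X \<mu> \<nu> \<longleftrightarrow> fst \<mu> = fst \<nu> \<and> (\<forall>x\<in>X. snd \<mu> x \<le> snd \<nu> x)"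

lemma pset_le_refl: "pset_le X \<mu> \<mu>"
  unfolding pset_le_def by simp

lemma pset_le_trans [trans]: "pset_le X \<mu> \<nu> \<Longrightarrow> pset_le X \<nu> \<rho> \<Longrightarrow> pset_le X \<mu> \<rho>"
  unfolding pset_le_def by (auto intro: order_trans)

locale unital_quantale =
  fixes mult :: "'q::complete_lattice \<Rightarrow> 'q \<Rightarrow> 'q" (infixl "\<odot>" 70) and e :: 'q
  assumes quantale: "quantale mult e"
begin

lemma mult_assoc: "(a \<odot> b) \<odot> c = a \<odot> (b \<odot> c)"
  using quantale unfolding quantale_def by blast

lemma mult_unit_left: "e \<odot> a = a"
  using quantale unfolding quantale_def by blast

lemma mult_unit_right: "a \<odot> e = a"
  using quantale unfolding quantale_def by blast

lemma mult_Sup_right: "a \<odot> Sup S = Sup ((\<odot>) a ` S)"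
  using quantale unfolding quantale_def by blast

lemma mult_Sup_left: "Sup S \<odot> b = Sup ((\<lambda>a. a \<odot> b) ` S)"
  using quantale unfolding quantale_def by blast

lemma mult_bot_right: "a \<odot> bot = bot"
  using mult_Sup_right[of a "{}"] by simp

lemma mult_mono_left: "a \<le> b \<Longrightarrow> a \<odot> c \<le> b \<odot> c"
  using mult_Sup_left[of "{a, b}" c] by (simp add: sup_absorb2 le_iff_sup)

lemma mult_mono_right: "a \<le> b \<Longrightarrow> c \<odot> a \<le> c \<odot> b"
  using mult_Sup_right[of c "{a, b}"] by (simp add: sup_absorb2 le_iff_sup)

lemma rimp_galois: "p \<odot> q \<le> r \<longleftrightarrow> p \<le> rimp mult r q"
proof
  assume "p \<le> rimp mult r q"
  then have "p \<odot> q \<le> rimp mult r q \<odot> q" by (rule mult_mono_left)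
  also have "\<dots> \<le> r"
    unfolding rimp_def mult_Sup_left by (auto intro: Sup_least)
  finally show "p \<odot> q \<le> r" .
qed (simp add: rimp_def Sup_upper)

lemma limp_galois: "p \<odot> q \<le> r \<longleftrightarrow> q \<le> limp mult p r"
proof
  assume "q \<le> limp mult p r"
  then have "p \<odot> q \<le> p \<odot> limp mult p r" by (rule mult_mono_right)
  also have "\<dots> \<le> r"
    unfolding limp_def mult_Sup_right by (auto intro: Sup_least)
  finally show "p \<odot> q \<le> r" .
qed (simp add: limp_def Sup_upper)

lemma rimp_counit: "rimp mult r q \<odot> q \<le> r"
  by (simp add: rimp_galois)

lemma limp_counit: "p \<odot> limp mult p r \<le> r"
  by (simp add: limp_galois)

lemma rimp_mono: "a \<le> b \<Longrightarrow> rimp mult a q \<le> rimp mult b q"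
  by (meson order_trans rimp_counit rimp_galois)

lemma limp_mono: "a \<le> b \<Longrightarrow> limp mult q a \<le> limp mult q b"
  by (meson order_trans limp_counit limp_galois)

lemma DQ_rimp_factor: "u \<in> DQ mult p q \<Longrightarrow> rimp mult u p \<odot> p = u"
  unfolding DQ_def by blast

lemma DQ_limp_factor: "u \<in> DQ mult p q \<Longrightarrow> q \<odot> limp mult q u = u"
  unfolding DQ_def by auto

lemma DQ_intro: "u \<le> rimp mult u p \<odot> p \<Longrightarrow> u \<le> q \<odot> limp mult q u \<Longrightarrow> u \<in> DQ mult p q"
  unfolding DQ_def using rimp_counit limp_counit by (blast intro: antisym)

lemma DQ_refl: "p \<in> DQ mult p p"
proof (rule DQ_intro)
  have "e \<le> rimp mult p p" "e \<le> limp mult p p"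
    by (simp_all flip: rimp_galois limp_galois add: mult_unit_left mult_unit_right)
  then show "p \<le> rimp mult p p \<odot> p" "p \<le> p \<odot> limp mult p p"
    by (metis mult_mono_left mult_unit_left, metis mult_mono_right mult_unit_right)
qed

lemma DQ_Sup:
  assumes "S \<subseteq> DQ mult p q"
  shows "Sup S \<in> DQ mult p q"
proof (rule DQ_intro; rule Sup_least)
  fix v assume v: "v \<in> S"
  then have "v \<in> DQ mult p q" using assms by blast
  then show "v \<le> rimp mult (Sup S) p \<odot> p" "v \<le> q \<odot> limp mult q (Sup S)"
    using v by (metis DQ_rimp_factor Sup_upper mult_mono_left rimp_mono,
                metis DQ_limp_factor Sup_upper mult_mono_right limp_mono)
qed

text \<open>\<open>(u / p) & a\<close> is the composite of \<open>u \<in> DQ p q\<close> after \<open>a \<in> DQ r p\<close>; as \<open>a = p & (p \<setminus> a)\<close>,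
  it equals \<open>u & (p \<setminus> a)\<close>, which makes associativity a matter of associativity of \<open>&\<close>.\<close>

lemma DQ_comp_eq:
  assumes "u \<in> DQ mult p q" and "a \<in> DQ mult r p"
  shows "rimp mult u p \<odot> a = u \<odot> limp mult p a"
  by (metis assms DQ_limp_factor DQ_rimp_factor mult_assoc)

lemma DQ_comp:
  assumes u: "u \<in> DQ mult p q" and a: "a \<in> DQ mult r p"
  shows "rimp mult u p \<odot> a \<in> DQ mult r q"
proof (rule DQ_intro)
  let ?c = "rimp mult u p \<odot> a"
  have "?c = (rimp mult u p \<odot> rimp mult a r) \<odot> r"
    using DQ_rimp_factor[OF a] by (simp add: mult_assoc)
  also have "\<dots> \<le> rimp mult ?c r \<odot> r"
    by (rule mult_mono_left) (simp flip: rimp_galois add: mult_assoc DQ_rimp_factor[OF a])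
  finally show "?c \<le> rimp mult ?c r \<odot> r" .
  have "?c = q \<odot> (limp mult q u \<odot> limp mult p a)"
    using DQ_comp_eq[OF u a] DQ_limp_factor[OF u] by (metis mult_assoc)
  also have "\<dots> \<le> q \<odot> limp mult q ?c"
    by (rule mult_mono_right)
       (simp flip: limp_galois mult_assoc add: DQ_limp_factor[OF u] DQ_comp_eq[OF u a])
  finally show "?c \<le> q \<odot> limp mult q ?c" .
qed

lemma DQ_comp_assoc:
  assumes u: "u \<in> DQ mult p q" and a: "a \<in> DQ mult r p" and c: "c \<in> DQ mult s r"
  shows "rimp mult (rimp mult u p \<odot> a) r \<odot> c = rimp mult u p \<odot> (rimp mult a r \<odot> c)"
  by (simp add: DQ_comp_eq[OF DQ_comp[OF u a] c] DQ_comp_eq[OF a c] mult_assoc)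

lemma DQ_comp_refl: "a \<in> DQ mult r p \<Longrightarrow> rimp mult p p \<odot> a = a"
  by (simp add: DQ_comp_eq[OF DQ_refl] DQ_limp_factor)

lemma DQ_comp_Sup:
  assumes S: "S \<subseteq> DQ mult p q" and a: "a \<in> DQ mult r p"
  shows "rimp mult (Sup S) p \<odot> a = Sup ((\<lambda>c. rimp mult c p \<odot> a) ` S)"
proof -
  have "rimp mult (Sup S) p \<odot> a = Sup ((\<lambda>c. c \<odot> limp mult p a) ` S)"
    by (simp add: DQ_comp_eq[OF DQ_Sup[OF S] a] mult_Sup_left)
  also have "\<dots> = Sup ((\<lambda>c. rimp mult c p \<odot> a) ` S)"
    by (intro arg_cong[where f = Sup] image_cong refl) (simp add: DQ_comp_eq[OF subsetD[OF S] a])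
  finally show ?thesis .
qed

lemma pset_iff: "(q, m) \<in> pset mult X nX R \<longleftrightarrow>
   (\<forall>x. x \<notin> X \<longrightarrow> m x = bot) \<and> (\<forall>x\<in>X. m x \<in> DQ mult (nX x) q) \<and>
   (\<forall>z\<in>X. \<forall>y\<in>X. rimp mult (m y) (nX y) \<odot> R z y \<le> m z)"
  unfolding pset_def qrel_def rel_le_def qcomp_def by (simp add: Sup_le_iff) blast

lemma pset_DQ: "\<mu> \<in> pset mult X nX R \<Longrightarrow> x \<in> X \<Longrightarrow> snd \<mu> x \<in> DQ mult (nX x) (fst \<mu>)"
  using pset_iff[of "fst \<mu>" "snd \<mu>"] by simp

lemma pset_outside: "\<mu> \<in> pset mult X nX R \<Longrightarrow> x \<notin> X \<Longrightarrow> snd \<mu> x = bot"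
  using pset_iff[of "fst \<mu>" "snd \<mu>"] by simp

lemma pset_lower: "\<mu> \<in> pset mult X nX R \<Longrightarrow> z \<in> X \<Longrightarrow> y \<in> X \<Longrightarrow>
   rimp mult (snd \<mu> y) (nX y) \<odot> R z y \<le> snd \<mu> z"
  using pset_iff[of "fst \<mu>" "snd \<mu>"] by simp

lemma pset_eqI:
  assumes "\<mu> \<in> pset mult X nX R" and "\<nu> \<in> pset mult X nX R"
    and "fst \<mu> = fst \<nu>" and "\<And>x. x \<in> X \<Longrightarrow> snd \<mu> x = snd \<nu> x"
  shows "\<mu> = \<nu>"
  using assms pset_outside[OF assms(1)] pset_outside[OF assms(2)] by (metis prod_eqI ext)

lemma pset_le_antisym:
  "\<mu> \<in> pset mult X nX R \<Longrightarrow> \<nu> \<in> pset mult X nX R \<Longrightarrow> pset_le X \<mu> \<nu> \<Longrightarrow> pset_le X \<nu> \<mu> \<Longrightarrow> \<mu> = \<nu>"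
  unfolding pset_le_def by (rule pset_eqI) (auto intro: antisym)

lemma qpreorder_DQ: "qpreorder mult X nX R \<Longrightarrow> z \<in> X \<Longrightarrow> y \<in> X \<Longrightarrow> R z y \<in> DQ mult (nX z) (nX y)"
  unfolding qpreorder_def qrel_def by blast

lemma qpreorder_refl: "qpreorder mult X nX R \<Longrightarrow> x \<in> X \<Longrightarrow> nX x \<le> R x x"
  unfolding qpreorder_def rel_le_def qid_def by force

lemma qpreorder_trans: "qpreorder mult X nX R \<Longrightarrow> z \<in> X \<Longrightarrow> y \<in> X \<Longrightarrow> x \<in> X \<Longrightarrow>
   rimp mult (R y x) (nX y) \<odot> R z y \<le> R z x"
  unfolding qpreorder_def rel_le_def qcomp_def by (force simp: Sup_le_iff)

lemma pcomp_in_pset: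
  assumes R: "qpreorder mult X nX R" and \<mu>: "\<mu> \<in> pset mult X nX R"
    and u: "u \<in> DQ mult (fst \<mu>) q"
  shows "pcomp mult u q \<mu> \<in> pset mult X nX R"
  unfolding pcomp_def pset_iff
proof (intro conjI ballI allI impI)
  fix x assume "x \<notin> X"
  then show "rimp mult u (fst \<mu>) \<odot> snd \<mu> x = bot"
    by (simp add: pset_outside[OF \<mu>] mult_bot_right)
next
  fix x assume "x \<in> X"
  then show "rimp mult u (fst \<mu>) \<odot> snd \<mu> x \<in> DQ mult (nX x) q"
    by (rule DQ_comp[OF u pset_DQ[OF \<mu>]])
next
  fix z y assume z: "z \<in> X" and y: "y \<in> X"
  have "rimp mult (rimp mult u (fst \<mu>) \<odot> snd \<mu> y) (nX y) \<odot> R z y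
     = rimp mult u (fst \<mu>) \<odot> (rimp mult (snd \<mu> y) (nX y) \<odot> R z y)"
    by (rule DQ_comp_assoc[OF u pset_DQ[OF \<mu> y] qpreorder_DQ[OF R z y]])
  also have "\<dots> \<le> rimp mult u (fst \<mu>) \<odot> snd \<mu> z"
    by (rule mult_mono_right, rule pset_lower[OF \<mu> z y])
  finally show "rimp mult (rimp mult u (fst \<mu>) \<odot> snd \<mu> y) (nX y) \<odot> R z y
     \<le> rimp mult u (fst \<mu>) \<odot> snd \<mu> z" .
qed

lemma pcomp_refl: "\<mu> \<in> pset mult X nX R \<Longrightarrow> pcomp mult (fst \<mu>) (fst \<mu>) \<mu> = \<mu>"
proof (rule prod_eqI)
  assume \<mu>: "\<mu> \<in> pset mult X nX R"
  show "snd (pcomp mult (fst \<mu>) (fst \<mu>) \<mu>) = snd \<mu>"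
  proof
    fix x show "snd (pcomp mult (fst \<mu>) (fst \<mu>) \<mu>) x = snd \<mu> x"
      by (cases "x \<in> X") (simp_all add: pcomp_def pset_outside[OF \<mu>] mult_bot_right
          DQ_comp_refl[OF pset_DQ[OF \<mu>]])
  qed
qed (simp add: pcomp_def)

lemma pcomp_pcomp:
  assumes \<mu>: "\<mu> \<in> pset mult X nX R"
    and a: "a \<in> DQ mult (fst \<mu>) p" and u: "u \<in> DQ mult p q"
  shows "pcomp mult u q (pcomp mult a p \<mu>) = pcomp mult (rimp mult u p \<odot> a) q \<mu>"
proof (rule prod_eqI)
  show "snd (pcomp mult u q (pcomp mult a p \<mu>)) = snd (pcomp mult (rimp mult u p \<odot> a) q \<mu>)"
  proof
    fix x
    show "snd (pcomp mult u q (pcomp mult a p \<mu>)) x = snd (pcomp mult (rimp mult u p \<odot> a) q \<mu>) x"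
      by (cases "x \<in> X") (simp_all add: pcomp_def pset_outside[OF \<mu>] mult_bot_right
          DQ_comp_assoc[OF u a pset_DQ[OF \<mu>]])
  qed
qed (simp add: pcomp_def)

lemma pcomp_mono: "pset_le X \<mu> \<nu> \<Longrightarrow> pset_le X (pcomp mult u q \<mu>) (pcomp mult u q \<nu>)"
  by (simp add: pset_le_def pcomp_def mult_mono_right)

lemma yon_in_pset: "qpreorder mult X nX R \<Longrightarrow> x \<in> X \<Longrightarrow> yon X nX R x \<in> pset mult X nX R"
  unfolding yon_def pset_iff by (auto simp: qpreorder_DQ qpreorder_trans)

lemma pcomp_yon_le:
  "\<mu> \<in> pset mult X nX R \<Longrightarrow> x \<in> X \<Longrightarrow> pset_le X (pcomp mult (snd \<mu> x) (fst \<mu>) (yon X nX R x)) \<mu>"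
  unfolding pset_le_def pcomp_def yon_def by (simp add: pset_lower)

lemma le_pcomp_yon_at:
  assumes "qpreorder mult X nX R" and "x \<in> X" and b: "b \<in> DQ mult (nX x) q"
  shows "b \<le> snd (pcomp mult b q (yon X nX R x)) x"
proof -
  have "b = rimp mult b (nX x) \<odot> nX x" using DQ_rimp_factor[OF b] by simp
  also have "\<dots> \<le> rimp mult b (nX x) \<odot> R x x"
    using assms by (intro mult_mono_right qpreorder_refl)
  finally show ?thesis using assms(2) by (simp add: pcomp_def yon_def)
qed

lemma prel_eq: "prel mult X \<mu> \<mu>' = Sup {v \<in> DQ mult (fst \<mu>) (fst \<mu>').
   \<forall>x\<in>X. rimp mult v (fst \<mu>) \<odot> snd \<mu> x \<le> snd \<mu>' x}"
  unfolding prel_def qlift_def qrel_def rel_le_def qcomp_def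
  by (rule arg_cong[where f = Sup]) (auto intro!: exI[of _ "\<lambda>_ _. _"])

lemma prel_DQ: "prel mult X \<mu> \<mu>' \<in> DQ mult (fst \<mu>) (fst \<mu>')"
  unfolding prel_eq by (rule DQ_Sup) blast

lemma le_prel_iff:
  assumes \<mu>: "\<mu> \<in> pset mult X nX R" and v: "v \<in> DQ mult (fst \<mu>) (fst \<mu>')"
  shows "v \<le> prel mult X \<mu> \<mu>' \<longleftrightarrow> pset_le X (pcomp mult v (fst \<mu>') \<mu>) \<mu>'"
proof -
  define C where "C = {v \<in> DQ mult (fst \<mu>) (fst \<mu>').
     \<forall>x\<in>X. rimp mult v (fst \<mu>) \<odot> snd \<mu> x \<le> snd \<mu>' x}"
  have C: "C \<subseteq> DQ mult (fst \<mu>) (fst \<mu>')" unfolding C_def by blast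
  have "v \<le> Sup C \<longleftrightarrow> v \<in> C"
  proof
    assume "v \<le> Sup C"
    have "rimp mult v (fst \<mu>) \<odot> snd \<mu> x \<le> snd \<mu>' x" if x: "x \<in> X" for x
    proof -
      have "rimp mult v (fst \<mu>) \<odot> snd \<mu> x \<le> rimp mult (Sup C) (fst \<mu>) \<odot> snd \<mu> x"
        using \<open>v \<le> Sup C\<close> by (intro mult_mono_left rimp_mono)
      also have "\<dots> = Sup ((\<lambda>c. rimp mult c (fst \<mu>) \<odot> snd \<mu> x) ` C)"
        by (rule DQ_comp_Sup[OF C pset_DQ[OF \<mu> x]])
      also have "\<dots> \<le> snd \<mu>' x"
        using x unfolding C_def by (auto intro: Sup_least)
      finally show ?thesis .
    qed
    then show "v \<in> C" using v unfolding C_def by blast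
  qed (simp add: Sup_upper)
  then show ?thesis
    using v unfolding prel_eq C_def[symmetric] by (simp add: C_def pset_le_def pcomp_def)
qed

lemma uleq_prel_iff:
  assumes \<mu>: "\<mu> \<in> pset mult X nX R"
  shows "uleq pnorm (prel mult X) \<mu> \<nu> \<longleftrightarrow> pset_le X \<mu> \<nu>"
proof (cases "fst \<mu> = fst \<nu>")
  case True
  then have refl: "fst \<mu> \<in> DQ mult (fst \<mu>) (fst \<nu>)" using DQ_refl by metis
  show ?thesis
    using le_prel_iff[OF \<mu> refl] True pcomp_refl[OF \<mu>] by (simp add: uleq_def pnorm_def)
qed (simp add: uleq_def pset_le_def pnorm_def)


abbreviation pset_map :: "'x set \<Rightarrow> ('x \<Rightarrow> 'q) \<Rightarrow> ('x \<Rightarrow> 'x \<Rightarrow> 'q) \<Rightarrow> 'y set \<Rightarrow> ('y \<Rightarrow> 'q)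
     \<Rightarrow> ('y \<Rightarrow> 'y \<Rightarrow> 'q) \<Rightarrow> ('q \<times> ('x \<Rightarrow> 'q) \<Rightarrow> 'q \<times> ('y \<Rightarrow> 'q)) \<Rightarrow> bool" where
  "pset_map X nX RX Y nY RY f \<equiv>
     qord_map (pset mult X nX RX) pnorm (prel mult X) (pset mult Y nY RY) pnorm (prel mult Y) f"

lemma pset_map_in:
  "pset_map X nX RX Y nY RY f \<Longrightarrow> \<mu> \<in> pset mult X nX RX \<Longrightarrow> f \<mu> \<in> pset mult Y nY RY"
  unfolding qord_map_def by blast

lemma pset_map_norm:
  "pset_map X nX RX Y nY RY f \<Longrightarrow> \<mu> \<in> pset mult X nX RX \<Longrightarrow> fst (f \<mu>) = fst \<mu>"
  unfolding qord_map_def pnorm_def by blast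

lemma pset_map_prel:
  "pset_map X nX RX Y nY RY f \<Longrightarrow> \<mu> \<in> pset mult X nX RX \<Longrightarrow> \<mu>' \<in> pset mult X nX RX \<Longrightarrow>
   prel mult X \<mu> \<mu>' \<le> prel mult Y (f \<mu>) (f \<mu>')"
  unfolding qord_map_def by blast

lemma pset_map_mono:
  assumes f: "pset_map X nX RX Y nY RY f"
    and \<mu>: "\<mu> \<in> pset mult X nX RX" and \<mu>': "\<mu>' \<in> pset mult X nX RX" and le: "pset_le X \<mu> \<mu>'"
  shows "pset_le Y (f \<mu>) (f \<mu>')"
proof -
  have "uleq pnorm (prel mult X) \<mu> \<mu>'" using uleq_prel_iff[OF \<mu>] le by simp
  then have "uleq pnorm (prel mult Y) (f \<mu>) (f \<mu>')"
    unfolding uleq_def pnorm_def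
    using pset_map_norm[OF f] pset_map_prel[OF f \<mu> \<mu>'] \<mu> \<mu>' by (metis order_trans)
  then show ?thesis using uleq_prel_iff[OF pset_map_in[OF f \<mu>]] by simp
qed

lemma pset_map_pcomp_le:
  assumes X: "qpreorder mult X nX RX" and f: "pset_map X nX RX Y nY RY f"
    and \<mu>: "\<mu> \<in> pset mult X nX RX" and u: "u \<in> DQ mult (fst \<mu>) q"
  shows "pset_le Y (pcomp mult u q (f \<mu>)) (f (pcomp mult u q \<mu>))"
proof -
  let ?\<mu>' = "pcomp mult u q \<mu>"
  have \<mu>': "?\<mu>' \<in> pset mult X nX RX" by (rule pcomp_in_pset[OF X \<mu> u])
  have norms: "fst (f \<mu>) = fst \<mu>" "fst (f ?\<mu>') = q"
    using pset_map_norm[OF f] \<mu> \<mu>' by (simp_all add: pcomp_def)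
  have "u \<le> prel mult X \<mu> ?\<mu>'"
    using le_prel_iff[OF \<mu>, of u ?\<mu>'] u by (simp add: pcomp_def pset_le_refl)
  also have "\<dots> \<le> prel mult Y (f \<mu>) (f ?\<mu>')" by (rule pset_map_prel[OF f \<mu> \<mu>'])
  finally show ?thesis
    using le_prel_iff[OF pset_map_in[OF f \<mu>], of u "f ?\<mu>'"] u norms by simp
qed


end

locale pset_galois = unital_quantale mult e
    for mult :: "'q::complete_lattice \<Rightarrow> 'q \<Rightarrow> 'q" (infixl "\<odot>" 70) and e :: 'q +
  fixes X :: "'a set" and nX :: "'a \<Rightarrow> 'q" and RX :: "'a \<Rightarrow> 'a \<Rightarrow> 'q"
    and Y :: "'b set" and nY :: "'b \<Rightarrow> 'q" and RY :: "'b \<Rightarrow> 'b \<Rightarrow> 'q"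
    and f :: "'q \<times> ('a \<Rightarrow> 'q) \<Rightarrow> 'q \<times> ('b \<Rightarrow> 'q)"
    and g :: "'q \<times> ('b \<Rightarrow> 'q) \<Rightarrow> 'q \<times> ('a \<Rightarrow> 'q)"
  assumes X: "qpreorder mult X nX RX" and Y: "qpreorder mult Y nY RY"
    and f: "pset_map X nX RX Y nY RY f"
    and g_in: "\<nu> \<in> pset mult Y nY RY \<Longrightarrow> g \<nu> \<in> pset mult X nX RX"
    and g_norm: "\<nu> \<in> pset mult Y nY RY \<Longrightarrow> fst (g \<nu>) = fst \<nu>"
    and adjoint: "\<mu> \<in> pset mult X nX RX \<Longrightarrow> \<nu> \<in> pset mult Y nY RY \<Longrightarrow>
       pset_le Y (f \<mu>) \<nu> \<longleftrightarrow> pset_le X \<mu> (g \<nu>)"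
begin

abbreviation "PX \<equiv> pset mult X nX RX"
abbreviation "PY \<equiv> pset mult Y nY RY"

lemma unit: "\<mu> \<in> PX \<Longrightarrow> pset_le X \<mu> (g (f \<mu>))"
  using adjoint pset_map_in[OF f] pset_le_refl by blast

lemma counit: "\<nu> \<in> PY \<Longrightarrow> pset_le Y (f (g \<nu>)) \<nu>"
  using adjoint g_in pset_le_refl by blast

lemma ul_left_adjoint_f: "ul_left_adjoint PX pnorm (prel mult X) PY pnorm (prel mult Y) f"
  unfolding ul_left_adjoint_def
proof (intro exI[of _ g] conjI ballI)
  fix \<mu> \<nu> assume \<mu>: "\<mu> \<in> PX" and \<nu>: "\<nu> \<in> PY"
  show "uleq pnorm (prel mult Y) (f \<mu>) \<nu> \<longleftrightarrow> uleq pnorm (prel mult X) \<mu> (g \<nu>)"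
    using adjoint[OF \<mu> \<nu>] uleq_prel_iff[OF pset_map_in[OF f \<mu>]] uleq_prel_iff[OF \<mu>] by simp
qed (rule g_in)

lemma qgalois_f_g: "qgalois PX pnorm (prel mult X) PY pnorm (prel mult Y) f g"
  unfolding qgalois_def map_le_def
proof (intro conjI ballI)
  fix \<mu> assume \<mu>: "\<mu> \<in> PX"
  have "uleq pnorm (prel mult X) \<mu> (g (f \<mu>))" using uleq_prel_iff[OF \<mu>] unit[OF \<mu>] by simp
  then show "pnorm \<mu> \<le> prel mult X (id \<mu>) ((g \<circ> f) \<mu>)" by (auto simp: uleq_def)
next
  fix \<nu> assume \<nu>: "\<nu> \<in> PY"
  have "uleq pnorm (prel mult Y) (f (g \<nu>)) \<nu>"
    using uleq_prel_iff[OF pset_map_in[OF f g_in[OF \<nu>]]] counit[OF \<nu>] by simp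
  then show "pnorm \<nu> \<le> prel mult Y ((f \<circ> g) \<nu>) (id \<nu>)" by (auto simp: uleq_def)
qed

text \<open>The inequality \<open>u \<circ> f \<mu> \<le> f (u \<circ> \<mu>)\<close> always holds, so only the converse, transposed
  along the adjunction, has to be checked.\<close>

lemma f_pcomp_eqI:
  assumes \<mu>: "\<mu> \<in> PX" and u: "u \<in> DQ mult (fst \<mu>) q"
    and le: "pset_le X (pcomp mult u q \<mu>) (g (pcomp mult u q (f \<mu>)))"
  shows "f (pcomp mult u q \<mu>) = pcomp mult u q (f \<mu>)"
proof (rule pset_le_antisym)
  have u': "u \<in> DQ mult (fst (f \<mu>)) q" using u pset_map_norm[OF f \<mu>] by simp
  show "pcomp mult u q (f \<mu>) \<in> PY" by (rule pcomp_in_pset[OF Y pset_map_in[OF f \<mu>] u'])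
  show "f (pcomp mult u q \<mu>) \<in> PY" by (rule pset_map_in[OF f pcomp_in_pset[OF X \<mu> u]])
  show "pset_le Y (f (pcomp mult u q \<mu>)) (pcomp mult u q (f \<mu>))"
    using adjoint[OF pcomp_in_pset[OF X \<mu> u] pcomp_in_pset[OF Y pset_map_in[OF f \<mu>] u']] le
    by blast
  show "pset_le Y (pcomp mult u q (f \<mu>)) (f (pcomp mult u q \<mu>))"
    by (rule pset_map_pcomp_le[OF X f \<mu> u])
qed

lemma f_pcomp_eq_if_qord_map:
  assumes g: "pset_map Y nY RY X nX RX g"
    and \<mu>: "\<mu> \<in> PX" and u: "u \<in> DQ mult (fst \<mu>) q"
  shows "f (pcomp mult u q \<mu>) = pcomp mult u q (f \<mu>)"
proof (rule f_pcomp_eqI[OF \<mu> u])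
  have "pset_le X (pcomp mult u q \<mu>) (pcomp mult u q (g (f \<mu>)))"
    by (rule pcomp_mono[OF unit[OF \<mu>]])
  also have "pset_le X \<dots> (g (pcomp mult u q (f \<mu>)))"
    using pset_map_pcomp_le[OF Y g pset_map_in[OF f \<mu>]] u pset_map_norm[OF f \<mu>] by simp
  finally show "pset_le X (pcomp mult u q \<mu>) (g (pcomp mult u q (f \<mu>)))" .
qed

lemma pset_map_g_if_pcomp_eq:
  assumes commute: "\<And>\<mu> q u. \<mu> \<in> PX \<Longrightarrow> u \<in> DQ mult (fst \<mu>) q \<Longrightarrow>
      f (pcomp mult u q \<mu>) = pcomp mult u q (f \<mu>)"
  shows "pset_map Y nY RY X nX RX g"
  unfolding qord_map_def pnorm_def
proof (intro ballI conjI)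
  fix \<nu> assume "\<nu> \<in> PY"
  then show "g \<nu> \<in> PX" "fst (g \<nu>) = fst \<nu>" by (simp_all add: g_in g_norm)
next
  fix \<nu> \<nu>' assume \<nu>: "\<nu> \<in> PY" and \<nu>': "\<nu>' \<in> PY"
  define v where "v = prel mult Y \<nu> \<nu>'"
  let ?q = "fst \<nu>'"
  have v: "v \<in> DQ mult (fst (g \<nu>)) ?q" unfolding v_def using prel_DQ g_norm[OF \<nu>] by simp
  have "f (pcomp mult v ?q (g \<nu>)) = pcomp mult v ?q (f (g \<nu>))" by (rule commute[OF g_in[OF \<nu>] v])
  also have "pset_le Y \<dots> (pcomp mult v ?q \<nu>)" by (rule pcomp_mono[OF counit[OF \<nu>]])
  also have "pset_le Y \<dots> \<nu>'" using le_prel_iff[OF \<nu> prel_DQ[of Y]] unfolding v_def by simp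
  finally have "pset_le X (pcomp mult v ?q (g \<nu>)) (g \<nu>')"
    using adjoint[OF pcomp_in_pset[OF X g_in[OF \<nu>] v] \<nu>'] by simp
  then show "prel mult Y \<nu> \<nu>' \<le> prel mult X (g \<nu>) (g \<nu>')"
    using le_prel_iff[OF g_in[OF \<nu>], of v "g \<nu>'"] v g_norm[OF \<nu>'] unfolding v_def by simp
qed

text \<open>Pointwise at \<open>x\<close>, with \<open>a = \<mu>(x)\<close>: \<open>f (a \<circ> y\<^sub>X x) = a \<circ> f (y\<^sub>X x) \<le> f \<mu>\<close>, hence
  \<open>f ((u \<circ> a) \<circ> y\<^sub>X x) \<le> u \<circ> f \<mu>\<close>, and the adjunction gives \<open>u \<circ> a \<le> g (u \<circ> f \<mu>) (x)\<close>.\<close>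

lemma f_pcomp_eq_if_yon_pcomp_eq:
  assumes yon_commute: "\<And>x q u. x \<in> X \<Longrightarrow> u \<in> DQ mult (nX x) q \<Longrightarrow>
      f (pcomp mult u q (yon X nX RX x)) = pcomp mult u q (f (yon X nX RX x))"
    and \<mu>: "\<mu> \<in> PX" and u: "u \<in> DQ mult (fst \<mu>) q"
  shows "f (pcomp mult u q \<mu>) = pcomp mult u q (f \<mu>)"
proof (rule f_pcomp_eqI[OF \<mu> u])
  let ?\<nu> = "pcomp mult u q (f \<mu>)"
  have "snd (pcomp mult u q \<mu>) x \<le> snd (g ?\<nu>) x" if x: "x \<in> X" for x
  proof -
    define a where "a = snd \<mu> x"
    define b where "b = rimp mult u (fst \<mu>) \<odot> a"
    let ?y = "yon X nX RX x"
    have a: "a \<in> DQ mult (nX x) (fst \<mu>)" unfolding a_def by (rule pset_DQ[OF \<mu> x])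
    have b: "b \<in> DQ mult (nX x) q" unfolding b_def by (rule DQ_comp[OF u a])
    have y: "?y \<in> PX" "fst ?y = nX x" using yon_in_pset[OF X x] by (auto simp: yon_def)
    have fy: "f ?y \<in> PY" "fst (f ?y) = nX x"
      using pset_map_in[OF f y(1)] pset_map_norm[OF f y(1)] y(2) by auto
    have "pcomp mult a (fst \<mu>) (f ?y) = f (pcomp mult a (fst \<mu>) ?y)"
      using yon_commute[OF x a] by simp
    also have "pset_le Y \<dots> (f \<mu>)"
      using pset_map_mono[OF f pcomp_in_pset[OF X y(1)] \<mu> pcomp_yon_le[OF \<mu> x]] a y(2)
      unfolding a_def by simp
    finally have "pset_le Y (pcomp mult u q (pcomp mult a (fst \<mu>) (f ?y))) ?\<nu>" by (rule pcomp_mono)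
    moreover have "pcomp mult u q (pcomp mult a (fst \<mu>) (f ?y)) = f (pcomp mult b q ?y)"
      using pcomp_pcomp[OF fy(1) _ u] a fy(2) yon_commute[OF x b] unfolding b_def by simp
    ultimately have "pset_le X (pcomp mult b q ?y) (g ?\<nu>)"
      using adjoint[OF pcomp_in_pset[OF X y(1)] pcomp_in_pset[OF Y pset_map_in[OF f \<mu>]]]
        b y(2) u pset_map_norm[OF f \<mu>] by simp
    then have "b \<le> snd (g ?\<nu>) x"
      using le_pcomp_yon_at[OF X x b] x unfolding pset_le_def by (blast intro: order_trans)
    then show ?thesis by (simp add: pcomp_def a_def b_def)
  qed
  moreover have "fst (g ?\<nu>) = q"
    using g_norm pcomp_in_pset[OF Y pset_map_in[OF f \<mu>]] u pset_map_norm[OF f \<mu>]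
    by (simp add: pcomp_def)
  ultimately show "pset_le X (pcomp mult u q \<mu>) (g ?\<nu>)" by (simp add: pset_le_def pcomp_def)
qed


end


context unital_quantale
begin

lemma pset_galois_if_qgalois:
  assumes X: "qpreorder mult X nX RX" and Y: "qpreorder mult Y nY RY"
    and f: "pset_map X nX RX Y nY RY f" and g: "pset_map Y nY RY X nX RX g"
    and gal: "qgalois (pset mult X nX RX) pnorm (prel mult X) (pset mult Y nY RY) pnorm (prel mult Y) f g"
  shows "pset_galois mult e X nX RX Y nY RY f g"
proof (intro pset_galois.intro pset_galois_axioms.intro)
  have unit: "pset_le X \<mu> (g (f \<mu>))" if \<mu>: "\<mu> \<in> pset mult X nX RX" for \<mu>
    unfolding uleq_prel_iff[OF \<mu>, symmetric]
    using gal \<mu> pset_map_norm[OF g pset_map_in[OF f \<mu>]] pset_map_norm[OF f \<mu>]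
    unfolding qgalois_def map_le_def uleq_def pnorm_def by simp
  have counit: "pset_le Y (f (g \<nu>)) \<nu>" if \<nu>: "\<nu> \<in> pset mult Y nY RY" for \<nu>
    unfolding uleq_prel_iff[OF pset_map_in[OF f pset_map_in[OF g \<nu>]], symmetric]
    using gal \<nu> pset_map_norm[OF f pset_map_in[OF g \<nu>]] pset_map_norm[OF g \<nu>]
    unfolding qgalois_def map_le_def uleq_def pnorm_def by simp
  fix \<mu> \<nu> assume \<mu>: "\<mu> \<in> pset mult X nX RX" and \<nu>: "\<nu> \<in> pset mult Y nY RY"
  show "pset_le Y (f \<mu>) \<nu> \<longleftrightarrow> pset_le X \<mu> (g \<nu>)"
  proof
    assume "pset_le Y (f \<mu>) \<nu>"
    then have "pset_le X (g (f \<mu>)) (g \<nu>)" by (rule pset_map_mono[OF g pset_map_in[OF f \<mu>] \<nu>])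
    then show "pset_le X \<mu> (g \<nu>)" using unit[OF \<mu>] pset_le_trans by blast
  next
    assume "pset_le X \<mu> (g \<nu>)"
    then have "pset_le Y (f \<mu>) (f (g \<nu>))" by (rule pset_map_mono[OF f \<mu> pset_map_in[OF g \<nu>]])
    then show "pset_le Y (f \<mu>) \<nu>" using counit[OF \<nu>] pset_le_trans by blast
  qed
qed (simp_all add: unital_quantale_axioms X Y f pset_map_in[OF g] pset_map_norm[OF g])

lemma pset_galois_if_ul_left_adjoint:
  assumes X: "qpreorder mult X nX RX" and Y: "qpreorder mult Y nY RY"
    and f: "pset_map X nX RX Y nY RY f"
    and ul: "ul_left_adjoint (pset mult X nX RX) pnorm (prel mult X) (pset mult Y nY RY) pnorm (prel mult Y) f"
  obtains g where "pset_galois mult e X nX RX Y nY RY f g"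
proof -
  obtain g where g_in: "\<forall>\<nu>\<in>pset mult Y nY RY. g \<nu> \<in> pset mult X nX RX"
    and adj: "\<forall>\<mu>\<in>pset mult X nX RX. \<forall>\<nu>\<in>pset mult Y nY RY.
       uleq pnorm (prel mult Y) (f \<mu>) \<nu> \<longleftrightarrow> uleq pnorm (prel mult X) \<mu> (g \<nu>)"
    using ul unfolding ul_left_adjoint_def by blast
  have adjoint: "pset_le Y (f \<mu>) \<nu> \<longleftrightarrow> pset_le X \<mu> (g \<nu>)"
    if \<mu>: "\<mu> \<in> pset mult X nX RX" and \<nu>: "\<nu> \<in> pset mult Y nY RY" for \<mu> \<nu>
    using adj[rule_format, OF \<mu> \<nu>] uleq_prel_iff[OF pset_map_in[OF f \<mu>]] uleq_prel_iff[OF \<mu>] by simp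
  have g_norm: "fst (g \<nu>) = fst \<nu>" if \<nu>: "\<nu> \<in> pset mult Y nY RY" for \<nu>
    using adjoint[OF bspec[OF g_in \<nu>] \<nu>] pset_le_refl pset_map_norm[OF f bspec[OF g_in \<nu>]]
    unfolding pset_le_def by simp
  show thesis
    by (rule that, intro pset_galois.intro pset_galois_axioms.intro)
       (simp_all add: unital_quantale_axioms X Y f g_in g_norm adjoint)
qed

lemma qgalois_iff_ul_left_adjoint_pcomp_eq:
  assumes X: "qpreorder mult X nX RX" and Y: "qpreorder mult Y nY RY"
    and f: "pset_map X nX RX Y nY RY f"
  shows "(\<exists>g. pset_map Y nY RY X nX RX g
            \<and> qgalois (pset mult X nX RX) pnorm (prel mult X) (pset mult Y nY RY) pnorm (prel mult Y) f g)
    \<longleftrightarrow> ul_left_adjoint (pset mult X nX RX) pnorm (prel mult X) (pset mult Y nY RY) pnorm (prel mult Y) f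
      \<and> (\<forall>\<mu>\<in>pset mult X nX RX. \<forall>q u. u \<in> DQ mult (pnorm \<mu>) q \<longrightarrow>
            f (pcomp mult u q \<mu>) = pcomp mult u q (f \<mu>))"
    (is "?I \<longleftrightarrow> ?UL \<and> ?commute")
proof
  assume ?I
  then obtain g where g: "pset_map Y nY RY X nX RX g"
    and gal: "qgalois (pset mult X nX RX) pnorm (prel mult X) (pset mult Y nY RY) pnorm (prel mult Y) f g"
    by blast
  interpret G: pset_galois mult e X nX RX Y nY RY f g
    by (rule pset_galois_if_qgalois[OF X Y f g gal])
  show "?UL \<and> ?commute"
    using G.ul_left_adjoint_f G.f_pcomp_eq_if_qord_map[OF g] by (simp add: pnorm_def)
next
  assume II: "?UL \<and> ?commute"
  then obtain g where "pset_galois mult e X nX RX Y nY RY f g"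
    using pset_galois_if_ul_left_adjoint[OF X Y f] by blast
  then interpret G: pset_galois mult e X nX RX Y nY RY f g .
  show ?I using G.pset_map_g_if_pcomp_eq G.qgalois_f_g II by (auto simp: pnorm_def)
qed

lemma pcomp_eq_iff_yon_pcomp_eq:
  assumes X: "qpreorder mult X nX RX" and Y: "qpreorder mult Y nY RY"
    and f: "pset_map X nX RX Y nY RY f"
    and ul: "ul_left_adjoint (pset mult X nX RX) pnorm (prel mult X) (pset mult Y nY RY) pnorm (prel mult Y) f"
  shows "(\<forall>\<mu>\<in>pset mult X nX RX. \<forall>q u. u \<in> DQ mult (pnorm \<mu>) q \<longrightarrow>
            f (pcomp mult u q \<mu>) = pcomp mult u q (f \<mu>))
    \<longleftrightarrow> (\<forall>x\<in>X. \<forall>q u. u \<in> DQ mult (nX x) q \<longrightarrow>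
            f (pcomp mult u q (yon X nX RX x)) = pcomp mult u q (f (yon X nX RX x)))"
proof -
  obtain g where "pset_galois mult e X nX RX Y nY RY f g"
    using pset_galois_if_ul_left_adjoint[OF X Y f ul] by blast
  then interpret G: pset_galois mult e X nX RX Y nY RY f g .
  show ?thesis
    using G.f_pcomp_eq_if_yon_pcomp_eq yon_in_pset[OF X] by (auto simp: pnorm_def yon_def)
qed

end

theorem proposition4p15:
  fixes mult :: "'q::complete_lattice \<Rightarrow> 'q \<Rightarrow> 'q" and e :: 'q
    and X :: "'a set" and nX :: "'a \<Rightarrow> 'q" and RX :: "'a \<Rightarrow> 'a \<Rightarrow> 'q"
    and Y :: "'b set" and nY :: "'b \<Rightarrow> 'q" and RY :: "'b \<Rightarrow> 'b \<Rightarrow> 'q"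
    and f :: "'q \<times> ('a \<Rightarrow> 'q) \<Rightarrow> 'q \<times> ('b \<Rightarrow> 'q)"
  assumes Q: "quantale mult e"
    and X: "qpreorder mult X nX RX"
    and Y: "qpreorder mult Y nY RY"
    and f: "qord_map (pset mult X nX RX) pnorm (prel mult X)
                     (pset mult Y nY RY) pnorm (prel mult Y) f"
  shows
   "((\<exists>g. qord_map (pset mult Y nY RY) pnorm (prel mult Y)
                   (pset mult X nX RX) pnorm (prel mult X) g
        \<and> qgalois (pset mult X nX RX) pnorm (prel mult X)
                  (pset mult Y nY RY) pnorm (prel mult Y) f g)
     \<longleftrightarrow>
     (ul_left_adjoint (pset mult X nX RX) pnorm (prel mult X)
                      (pset mult Y nY RY) pnorm (prel mult Y) f
      \<and> (\<forall>\<mu>\<in>pset mult X nX RX. \<forall>q u. u \<in> DQ mult (pnorm \<mu>) q \<longrightarrow>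
            f (pcomp mult u q \<mu>) = pcomp mult u q (f \<mu>))))
    \<and>
    ((\<exists>g. qord_map (pset mult Y nY RY) pnorm (prel mult Y)
                   (pset mult X nX RX) pnorm (prel mult X) g
        \<and> qgalois (pset mult X nX RX) pnorm (prel mult X)
                  (pset mult Y nY RY) pnorm (prel mult Y) f g)
     \<longleftrightarrow>
     (ul_left_adjoint (pset mult X nX RX) pnorm (prel mult X)
                      (pset mult Y nY RY) pnorm (prel mult Y) f
      \<and> (\<forall>x\<in>X. \<forall>q u. u \<in> DQ mult (nX x) q \<longrightarrow>
            f (pcomp mult u q (yon X nX RX x)) = pcomp mult u q (f (yon X nX RX x)))))"
proof -
  interpret unital_quantale mult e by (rule unital_quantale.intro[OF Q])
  show ?thesis
    using qgalois_iff_ul_left_adjoint_pcomp_eq[OF X Y f] pcomp_eq_iff_yon_pcomp_eq[OF X Y f] by blast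
qed

end
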